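(* $\mathsf{SquaMS}$ has no final object.
   Context: Let $M_0=\{(r,s)\in[0,1]^2: r\in\{0,1\}\text{ or } s\in\{0,1\}\}$. A square metric space is a pair $(X,S_X)$ with $X$ a metric space with all distances at most $2$ and $S_X\colon M_0\to X$ injective such that (sq1) for $i\in\{0,1\}$, $r,s\in[0,1]$: $d_X(S_X(i,r),S_X(i,s))=|s-r|$ and $d_X(S_X(r,i),S_X(s,i))=|s-r|$; (sq2) $d_X(S_X(r,s),S_X(t,u))\ge|r-t|+|s-u|$ for all $(r,s),(t,u)\in M_0$. $\mathsf{SquaMS}$ has these as objects and short maps $f\colon X\to Y$ with $f\circ S_X=S_Y$ as morphisms. *)

theory Defs
  imports "HOL-Analysis.Analysis"
begin

definition M0 :: "(real \<times> real) set" where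
  "M0 = {(r, s). r \<in> {0..1} \<and> s \<in> {0..1} \<and> (r \<in> {0, 1} \<or> s \<in> {0, 1})}"

definition square_ms :: "'a metric \<Rightarrow> (real \<times> real \<Rightarrow> 'a) \<Rightarrow> bool" where
  "square_ms X S \<longleftrightarrow>
     (\<forall>x\<in>mspace X. \<forall>y\<in>mspace X. mdist X x y \<le> 2) \<and>
     S ` M0 \<subseteq> mspace X \<and> inj_on S M0 \<and>
     (\<forall>i\<in>{0::real, 1}. \<forall>r\<in>{0..1}. \<forall>s\<in>{0..1}.
        mdist X (S (i, r)) (S (i, s)) = \<bar>s - r\<bar> \<and>
        mdist X (S (r, i)) (S (s, i)) = \<bar>s - r\<bar>) \<and>
     (\<forall>r s t u. (r, s) \<in> M0 \<longrightarrow> (t, u) \<in> M0 \<longrightarrow>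
        mdist X (S (r, s)) (S (t, u)) \<ge> \<bar>r - t\<bar> + \<bar>s - u\<bar>)"

text \<open>Morphisms of SquaMS: short maps commuting with the square embeddings
  (maps are considered on the carrier only).\<close>
definition squams_hom ::
  "'a metric \<Rightarrow> (real \<times> real \<Rightarrow> 'a) \<Rightarrow> 'b metric \<Rightarrow> (real \<times> real \<Rightarrow> 'b) \<Rightarrow> ('a \<Rightarrow> 'b) \<Rightarrow> bool" where
  "squams_hom X SX Y SY f \<longleftrightarrow>
     f \<in> mspace X \<rightarrow> mspace Y \<and>
     (\<forall>x\<in>mspace X. \<forall>y\<in>mspace X. mdist Y (f x) (f y) \<le> mdist X x y) \<and>
     (\<forall>p\<in>M0. f (SX p) = SY p)"

text \<open>(T, ST) is final with respect to all square metric spaces whose points live in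
  the type 'a: for each such object there is exactly one morphism into (T, ST)
  (uniqueness as functions on the carrier).\<close>
definition squams_final_wrt :: "'a itself \<Rightarrow> 'b metric \<Rightarrow> (real \<times> real \<Rightarrow> 'b) \<Rightarrow> bool" where
  "squams_final_wrt _ T ST \<longleftrightarrow>
     (\<forall>(X::'a metric) SX. square_ms X SX \<longrightarrow>
        (\<exists>f. squams_hom X SX T ST f) \<and>
        (\<forall>f g. squams_hom X SX T ST f \<longrightarrow> squams_hom X SX T ST g \<longrightarrow>
               (\<forall>x\<in>mspace X. f x = g x)))"

end

theory Submission
  imports Defs
begin

text \<open>Adjoining to a square metric space T a new point at distance 2 from every point of T
  gives another square metric space, with the same square. Every point c of T yields a
  morphism from it to T, namely the identity on T sending the new point to c. Since T has at
  least two points, morphisms into T are not unique, so T is not final.\<close>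

definition adjoin_point_dist :: "real \<Rightarrow> 'a metric \<Rightarrow> 'a option \<Rightarrow> 'a option \<Rightarrow> real" where
  "adjoin_point_dist D T x y =
     (case (x, y) of
        (Some a, Some b) \<Rightarrow> mdist T a b
      | (None, None) \<Rightarrow> 0
      | _ \<Rightarrow> D)"

lemma adjoin_point_dist_simps [simp]:
  "adjoin_point_dist D T None None = 0"
  "adjoin_point_dist D T None (Some a) = D"
  "adjoin_point_dist D T (Some a) None = D"
  "adjoin_point_dist D T (Some a) (Some b) = mdist T a b"
  by (simp_all add: adjoin_point_dist_def)

lemma Metric_space_adjoin_point:
  assumes "0 < D" and diam: "\<forall>x\<in>mspace T. \<forall>y\<in>mspace T. mdist T x y \<le> D"
  shows "Metric_space (insert None (Some ` mspace T)) (adjoin_point_dist D T)"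
proof
  fix x y :: "'a option"
  show "0 \<le> adjoin_point_dist D T x y"
    using \<open>0 < D\<close> by (cases x; cases y; simp)
  show "adjoin_point_dist D T x y = adjoin_point_dist D T y x"
    by (cases x; cases y; simp add: mdist_commute)
next
  fix x y :: "'a option"
  assume "x \<in> insert None (Some ` mspace T)" "y \<in> insert None (Some ` mspace T)"
  then show "adjoin_point_dist D T x y = 0 \<longleftrightarrow> x = y"
    using \<open>0 < D\<close> by (cases x; cases y; auto)
next
  fix x y z :: "'a option"
  assume "x \<in> insert None (Some ` mspace T)" "y \<in> insert None (Some ` mspace T)"
    "z \<in> insert None (Some ` mspace T)"
  then show "adjoin_point_dist D T x z \<le> adjoin_point_dist D T x y + adjoin_point_dist D T y z"
    using \<open>0 < D\<close> diam
    by (cases x; cases y; cases z; force intro: mdist_triangle add_increasing)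
qed

definition adjoin_point_metric :: "real \<Rightarrow> 'a metric \<Rightarrow> 'a option metric" where
  "adjoin_point_metric D T = metric (insert None (Some ` mspace T), adjoin_point_dist D T)"

lemma
  assumes "0 < D" and "\<forall>x\<in>mspace T. \<forall>y\<in>mspace T. mdist T x y \<le> D"
  shows mspace_adjoin_point_metric: "mspace (adjoin_point_metric D T) = insert None (Some ` mspace T)"
    and mdist_adjoin_point_metric: "mdist (adjoin_point_metric D T) = adjoin_point_dist D T"
  using Metric_space_adjoin_point [OF assms]
  by (simp_all add: adjoin_point_metric_def Metric_space.mspace_metric Metric_space.mdist_metric)

lemma square_ms_diam_le: "square_ms X S \<Longrightarrow> \<forall>x\<in>mspace X. \<forall>y\<in>mspace X. mdist X x y \<le> 2"
  by (simp add: square_ms_def)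

lemma square_ms_adjoin_point:
  assumes "square_ms T S"
  shows "square_ms (adjoin_point_metric 2 T) (Some \<circ> S)"
  using assms
  unfolding square_ms_def mspace_adjoin_point_metric [OF zero_less_numeral square_ms_diam_le [OF assms]]
    mdist_adjoin_point_metric [OF zero_less_numeral square_ms_diam_le [OF assms]]
  by (auto simp: inj_on_def)

lemma squams_hom_collapse_adjoined_point:
  assumes "square_ms T S" and "c \<in> mspace T"
  shows "squams_hom (adjoin_point_metric 2 T) (Some \<circ> S) T S (case_option c id)"
proof -
  have diam: "\<forall>x\<in>mspace T. \<forall>y\<in>mspace T. mdist T x y \<le> 2"
    using square_ms_diam_le [OF assms(1)] .
  have "mdist T (case_option c id x) (case_option c id y) \<le> adjoin_point_dist 2 T x y"
    if "x \<in> insert None (Some ` mspace T)" "y \<in> insert None (Some ` mspace T)" for x y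
    using that diam \<open>c \<in> mspace T\<close> mdist_zero [of c T c]
    by (cases x; cases y; auto simp del: mdist_zero)
  then show ?thesis
    using \<open>c \<in> mspace T\<close>
    unfolding squams_hom_def mspace_adjoin_point_metric [OF zero_less_numeral diam]
      mdist_adjoin_point_metric [OF zero_less_numeral diam]
    by auto
qed

lemma square_ms_corners_neq:
  assumes "square_ms X S"
  shows "S (0, 0) \<noteq> S (1, 0)"
proof -
  have "(0, 0) \<in> M0" "(1, 0) \<in> M0"
    by (auto simp: M0_def)
  with assms show ?thesis
    unfolding square_ms_def inj_on_def by (metis prod.inject zero_neq_one)
qed

lemma square_ms_corners_in_mspace:
  assumes "square_ms X S"
  shows "S (0, 0) \<in> mspace X" "S (1, 0) \<in> mspace X"
  using assms by (auto simp: square_ms_def M0_def)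

theorem mainTheorem20:
  fixes T :: "'b metric" and ST :: "real \<times> real \<Rightarrow> 'b"
  assumes "square_ms T ST"
  shows "\<not> squams_final_wrt TYPE('b option) T ST"
proof
  assume "squams_final_wrt TYPE('b option) T ST"
  moreover have "square_ms (adjoin_point_metric 2 T) (Some \<circ> ST)"
    using square_ms_adjoin_point [OF assms] .
  moreover have "squams_hom (adjoin_point_metric 2 T) (Some \<circ> ST) T ST (case_option (ST (0, 0)) id)"
    and "squams_hom (adjoin_point_metric 2 T) (Some \<circ> ST) T ST (case_option (ST (1, 0)) id)"
    using squams_hom_collapse_adjoined_point [OF assms] square_ms_corners_in_mspace [OF assms]
    by auto
  moreover have "None \<in> mspace (adjoin_point_metric 2 T)"
    using mspace_adjoin_point_metric [OF zero_less_numeral square_ms_diam_le [OF assms]] by simp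
  ultimately have "ST (0, 0) = ST (1, 0)"
    unfolding squams_final_wrt_def by fastforce
  with square_ms_corners_neq [OF assms] show False ..
qed

end
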